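(* Let $Z=\operatorname{diag}(z_1,\dots,z_N)$ with distinct real $z_i$, and let $\bm w_1,\bm w_2,\bm v_1\in\mathbb{R}^N$ satisfy $\bm w_1^T\bm v_1=1$, $\bm w_2^T\bm v_1=0$, $\bm w_2^TZ\bm v_1=1$. Suppose there exist $V=[\bm v_1,\dots,\bm v_N]$, $W=[\bm w_1,\dots,\bm w_N]\in\mathbb{R}^{N\times N}$ (with the given first columns $\bm v_1$ and $\bm w_1,\bm w_2$) and $H\in\mathbb{R}^{N\times N}$ with $H_{i,i}=b_{i-1}$, $H_{i+1,i}=1$, $H_{i,i+1}=c_i$, $H_{i,i+2}=d_{i+1}$ and all other entries zero, such that $W^TZV=H$ and $W^TV=I_N$. Assume moreover $d_n\neq0$ for $n=2,\dots,N-1$. Then for every $m\le N$, $\{\bm v_i\}_{i=1}^m$ is a basis of $\mathcal K_m(Z,\bm v_1)$ and $\{\bm w_i\}_{i=1}^m$ is a basis of $\mathcal K_m^{\square}(Z,[\bm w_1,\bm w_2])$.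
   Context: Krylov subspace: $\mathcal K_m(M,\bm v)=\operatorname{span}\{\bm v,M\bm v,\dots,M^{m-1}\bm v\}$. Block Krylov subspace with two starting vectors: $\mathcal K_m^{\square}(M,[\bm w_1,\bm w_2])=\mathcal K_k(M,\bm w_1)+\mathcal K_k(M,\bm w_2)$ if $m=2k$, and $=\mathcal K_{k+1}(M,\bm w_1)+\mathcal K_k(M,\bm w_2)$ if $m=2k+1$ (with $\mathcal K_0=\{0\}$). *)

theory Defs
  imports "HOL-Analysis.Analysis"
begin

definition diag_mat :: "('n::finite \<Rightarrow> real) \<Rightarrow> real^'n^'n" where
  "diag_mat z = (\<chi> i j. if i = j then z i else 0)"

definition krylov :: "real^'n^'n \<Rightarrow> real^'n \<Rightarrow> nat \<Rightarrow> (real^'n) set" where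
  "krylov M v m = span {((\<lambda>x. M *v x) ^^ k) v | k. k < m}"

text \<open>Block Krylov subspace with two starting vectors:
  m = 2k: K_k(M,w1) + K_k(M,w2);  m = 2k+1: K_(k+1)(M,w1) + K_k(M,w2).\<close>
definition block_krylov :: "real^'n^'n \<Rightarrow> real^'n \<Rightarrow> real^'n \<Rightarrow> nat \<Rightarrow> (real^'n) set" where
  "block_krylov M w1 w2 m =
     {x + y | x y. x \<in> krylov M w1 ((m + 1) div 2) \<and> y \<in> krylov M w2 (m div 2)}"

definition is_basis_family :: "(nat \<Rightarrow> real^'n) \<Rightarrow> nat \<Rightarrow> (real^'n) set \<Rightarrow> bool" where
  "is_basis_family b m S \<longleftrightarrow>
     inj_on b {1..m} \<and> independent (b ` {1..m}) \<and> span (b ` {1..m}) = S"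

end

theory Submission
  imports Defs
begin

text \<open>Since \<open>W\<^sup>T V = I\<close>, the families \<open>v\<close> and \<open>w\<close> are dual bases, so column \<open>j\<close> of
  \<open>H = W\<^sup>T Z V\<close> lists the coordinates of \<open>Z v\<^sub>j\<close> in the basis \<open>v\<close> and, \<open>Z\<close> being symmetric,
  row \<open>j\<close> lists those of \<open>Z w\<^sub>j\<close> in the basis \<open>w\<close>. The band shape of \<open>H\<close> thus gives
  \<open>Z v\<^sub>j \<in> v\<^bsub>j+1\<^esub> + span {v\<^sub>1, \<dots>, v\<^sub>j}\<close> and
  \<open>Z w\<^sub>j \<in> d\<^bsub>j+1\<^esub> w\<^bsub>j+2\<^esub> + span {w\<^sub>1, \<dots>, w\<^bsub>j+1\<^esub>}\<close>.
  A recurrence \<open>f e\<^sub>j \<in> \<gamma>\<^sub>j e\<^bsub>j+p\<^esub> + span {e\<^sub>1, \<dots>, e\<^bsub>j+p-1\<^esub>}\<close> with \<open>\<gamma>\<^sub>j \<noteq> 0\<close> makes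
  \<open>span {e\<^sub>1, \<dots>, e\<^sub>m}\<close> the block Krylov space of \<open>f\<close> started at \<open>e\<^sub>1, \<dots>, e\<^sub>p\<close>, by induction
  in both directions; apply this with \<open>p = 1\<close> to \<open>v\<close> and with \<open>p = 2\<close> (using \<open>d\<^sub>n \<noteq> 0\<close>) to
  \<open>w\<close>. Linear independence is again a consequence of biorthogonality.\<close>

definition biorthogonal :: "(nat \<Rightarrow> 'a::real_inner) \<Rightarrow> (nat \<Rightarrow> 'a) \<Rightarrow> nat set \<Rightarrow> bool" where
  "biorthogonal u e I \<longleftrightarrow> (\<forall>i\<in>I. \<forall>j\<in>I. u i \<bullet> e j = (if i = j then 1 else 0))"

lemma biorthogonal_commute: "biorthogonal u e I \<longleftrightarrow> biorthogonal e u I"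
  by (auto simp: biorthogonal_def inner_commute)

lemma biorthogonal_subset: "biorthogonal u e J \<Longrightarrow> I \<subseteq> J \<Longrightarrow> biorthogonal u e I"
  unfolding biorthogonal_def by blast

lemma biorthogonal_imp_inj_on: "biorthogonal u e I \<Longrightarrow> inj_on e I"
  by (rule inj_onI) (metis biorthogonal_def zero_neq_one)

lemma biorthogonal_imp_independent:
  assumes bo: "biorthogonal u e I" and "finite I"
  shows "independent (e ` I)"
proof (rule independent_if_scalars_zero)
  show "finite (e ` I)" using \<open>finite I\<close> by simp
next
  fix a x assume comb: "(\<Sum>y\<in>e ` I. a y *\<^sub>R y) = 0" and "x \<in> e ` I"
  then obtain j where j: "j \<in> I" "x = e j" by auto
  have "0 = u j \<bullet> (\<Sum>i\<in>I. a (e i) *\<^sub>R e i)"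
    using comb by (simp add: sum.reindex[OF biorthogonal_imp_inj_on[OF bo]])
  also have "\<dots> = (\<Sum>i\<in>I. if i = j then a (e j) else 0)"
    using bo j by (auto simp: inner_sum_right biorthogonal_def intro!: sum.cong)
  also have "\<dots> = a x" using \<open>finite I\<close> j by simp
  finally show "a x = 0" by simp
qed

lemma biorthogonal_span_UNIV:
  fixes e :: "nat \<Rightarrow> 'a::euclidean_space"
  assumes bo: "biorthogonal u e {1..DIM('a)}"
  shows "span (e ` {1..DIM('a)}) = UNIV"
proof -
  have "card (e ` {1..DIM('a)}) = DIM('a)"
    using biorthogonal_imp_inj_on[OF bo] by (simp add: card_image)
  then have "UNIV \<subseteq> span (e ` {1..DIM('a)})"
    by (intro card_ge_dim_independent biorthogonal_imp_independent[OF bo]) (auto simp: dim_UNIV)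
  then show ?thesis by auto
qed

lemma biorthogonal_expansion:
  fixes e :: "nat \<Rightarrow> 'a::euclidean_space"
  assumes bo: "biorthogonal u e {1..DIM('a)}"
  shows "x = (\<Sum>i=1..DIM('a). (u i \<bullet> x) *\<^sub>R e i)"
proof -
  define r where "r = x - (\<Sum>i=1..DIM('a). (u i \<bullet> x) *\<^sub>R e i)"
  have r_perp: "u j \<bullet> r = 0" if j: "j \<in> {1..DIM('a)}" for j
  proof -
    have "u j \<bullet> (\<Sum>i=1..DIM('a). (u i \<bullet> x) *\<^sub>R e i) = (\<Sum>i=1..DIM('a). (u i \<bullet> x) * (u j \<bullet> e i))"
      by (simp add: inner_sum_right)
    also have "\<dots> = (\<Sum>i=1..DIM('a). if i = j then u j \<bullet> x else 0)"
      using bo j by (intro sum.cong) (auto simp: biorthogonal_def)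
    finally have "u j \<bullet> (\<Sum>i=1..DIM('a). (u i \<bullet> x) *\<^sub>R e i) = u j \<bullet> x"
      using j by simp
    then show ?thesis by (simp add: r_def inner_diff_right)
  qed
  have "r \<in> span (u ` {1..DIM('a)})"
    using biorthogonal_span_UNIV bo by (auto simp: biorthogonal_commute)
  then have "orthogonal r r"
    by (rule orthogonal_to_span) (use r_perp in \<open>auto simp: orthogonal_def inner_commute\<close>)
  then show ?thesis by (simp add: r_def orthogonal_def)
qed

lemma in_span_if_biorthogonal_coeffs_vanish:
  fixes e :: "nat \<Rightarrow> 'a::euclidean_space"
  assumes bo: "biorthogonal u e {1..DIM('a)}"
    and vanish: "\<And>i. k \<le> i \<Longrightarrow> i \<le> DIM('a) \<Longrightarrow> u i \<bullet> x = 0"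
  shows "x \<in> span (e ` {1..<k})"
proof -
  have "(\<Sum>i=1..DIM('a). (u i \<bullet> x) *\<^sub>R e i) \<in> span (e ` {1..<k})"
  proof (rule span_sum)
    fix i assume "i \<in> {1..DIM('a)}"
    then show "(u i \<bullet> x) *\<^sub>R e i \<in> span (e ` {1..<k})"
      using vanish[of i] by (cases "i < k") (simp_all add: span_mul span_base span_zero)
  qed
  then show ?thesis using biorthogonal_expansion[OF bo] by metis
qed

lemma biorthogonal_diff_leading_in_span:
  fixes e :: "nat \<Rightarrow> 'a::euclidean_space"
  assumes bo: "biorthogonal u e {1..DIM('a)}" and "1 \<le> k"
    and coeffs: "\<And>i. k \<le> i \<Longrightarrow> i \<le> DIM('a) \<Longrightarrow> u i \<bullet> y = (if i = k then \<gamma> else 0)"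
  shows "y - \<gamma> *\<^sub>R e k \<in> span (e ` {1..<k})"
proof (rule in_span_if_biorthogonal_coeffs_vanish[OF bo])
  fix i assume i: "k \<le> i" "i \<le> DIM('a)"
  then have "u i \<bullet> e k = (if i = k then 1 else 0)"
    using bo \<open>1 \<le> k\<close> by (simp add: biorthogonal_def)
  then show "u i \<bullet> (y - \<gamma> *\<^sub>R e k) = 0"
    using coeffs[OF i] by (simp add: inner_diff_right)
qed

lemma is_basis_family_if_biorthogonal:
  "biorthogonal u e {1..m} \<Longrightarrow> span (e ` {1..m}) = S \<Longrightarrow> is_basis_family e m S"
  by (simp add: is_basis_family_def biorthogonal_imp_inj_on biorthogonal_imp_independent)

lemma inner_symmetric_matrix:
  fixes A :: "real^'n^'n"
  assumes "transpose A = A"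
  shows "x \<bullet> (A *v y) = y \<bullet> (A *v x)"
  by (metis assms dot_lmul_matrix inner_commute vector_transpose_matrix)

lemma transpose_diag_mat: "transpose (diag_mat z) = diag_mat z"
  by (simp add: transpose_def diag_mat_def vec_eq_iff)

lemma linear_image_span_subset:
  assumes "linear f" and "f ` S \<subseteq> span T"
  shows "f ` span S \<subseteq> span T"
  using assms by (metis linear_span_image span_minimal subspace_span)

text \<open>The first \<open>m\<close> vectors of \<open>e\<^sub>1, \<dots>, e\<^sub>p, f e\<^sub>1, \<dots>, f e\<^sub>p, f\<^sup>2 e\<^sub>1, \<dots>\<close>, whose span is the
  block Krylov space \<open>K\<^sub>m(f, [e\<^sub>1, \<dots>, e\<^sub>p])\<close>.\<close>

definition block_krylov_gens :: "('a \<Rightarrow> 'a) \<Rightarrow> (nat \<Rightarrow> 'a) \<Rightarrow> nat \<Rightarrow> nat \<Rightarrow> 'a set" where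
  "block_krylov_gens f e p m = {(f ^^ k) (e r) | k r. r \<in> {1..p} \<and> k * p + r \<le> m}"

lemma block_krylov_gens_mono:
  "m \<le> m' \<Longrightarrow> block_krylov_gens f e p m \<subseteq> block_krylov_gens f e p m'"
  by (fastforce simp: block_krylov_gens_def)

lemma image_block_krylov_gens:
  "f ` block_krylov_gens f e p m \<subseteq> block_krylov_gens f e p (m + p)"
proof
  fix y assume "y \<in> f ` block_krylov_gens f e p m"
  then obtain k r where "r \<in> {1..p}" "k * p + r \<le> m" "y = (f ^^ Suc k) (e r)"
    by (auto simp: block_krylov_gens_def)
  then show "y \<in> block_krylov_gens f e p (m + p)"
    unfolding block_krylov_gens_def by (intro CollectI exI[of _ "Suc k"] exI[of _ r]) simp
qed

locale block_krylov_recurrence =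
  fixes f :: "'a::real_vector \<Rightarrow> 'a" and e :: "nat \<Rightarrow> 'a" and p n :: nat and \<gamma> :: "nat \<Rightarrow> real"
  assumes linear: "linear f"
    and step_pos: "0 < p"
    and recurrence: "\<And>j. 1 \<le> j \<Longrightarrow> j + p \<le> n \<Longrightarrow> f (e j) - \<gamma> j *\<^sub>R e (j + p) \<in> span (e ` {1..<j + p})"
    and leading_nonzero: "\<And>j. 1 \<le> j \<Longrightarrow> j + p \<le> n \<Longrightarrow> \<gamma> j \<noteq> 0"
begin

lemma prefix_span_mono: "i \<le> j \<Longrightarrow> span (e ` {1..i}) \<subseteq> span (e ` {1..j})"
  by (intro span_mono image_mono) auto

lemma image_prefix_span:
  assumes "j + p \<le> n"
  shows "f ` span (e ` {1..j}) \<subseteq> span (e ` {1..j + p})"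
proof (rule linear_image_span_subset[OF linear], safe)
  fix i assume i: "i \<in> {1..j}"
  have "f (e i) - \<gamma> i *\<^sub>R e (i + p) \<in> span (e ` {1..<i + p})"
    using i assms by (intro recurrence) auto
  moreover have "span (e ` {1..<i + p}) \<subseteq> span (e ` {1..j + p})"
    using i by (intro span_mono image_mono) auto
  ultimately have remainder: "f (e i) - \<gamma> i *\<^sub>R e (i + p) \<in> span (e ` {1..j + p})"
    by blast
  have leading: "\<gamma> i *\<^sub>R e (i + p) \<in> span (e ` {1..j + p})"
    using i by (intro span_mul span_base) auto
  show "f (e i) \<in> span (e ` {1..j + p})"
    using span_add[OF remainder leading] by simp
qed

lemma funpow_in_prefix_span:
  assumes "r \<in> {1..p}" and "k * p + r \<le> n"
  shows "(f ^^ k) (e r) \<in> span (e ` {1..k * p + r})"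
  using assms(2)
proof (induction k)
  case 0
  then show ?case using assms(1) by (auto intro: span_base)
next
  case (Suc k)
  then have "f ((f ^^ k) (e r)) \<in> span (e ` {1..k * p + r + p})"
    using image_prefix_span[of "k * p + r"] by auto
  then show ?case by (simp add: add.commute add.left_commute)
qed

lemma in_span_block_krylov_gens:
  assumes "1 \<le> j" and "j \<le> n"
  shows "e j \<in> span (block_krylov_gens f e p j)"
  using assms
proof (induction j rule: less_induct)
  case (less j)
  show ?case
  proof (cases "j \<le> p")
    case True
    then have "e j \<in> block_krylov_gens f e p j"
      using less.prems unfolding block_krylov_gens_def by (intro CollectI exI[of _ 0] exI[of _ j]) simp
    then show ?thesis by (rule span_base)
  next
    case False
    then obtain i where i: "j = i + p" "1 \<le> i"
      by (intro that[of "j - p"]) auto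
    let ?K = "span (block_krylov_gens f e p j)"
    have lower: "span (e ` {1..<j}) \<subseteq> ?K"
    proof (rule span_minimal[OF _ subspace_span], safe)
      fix l assume "l \<in> {1..<j}"
      then show "e l \<in> ?K"
        using less.IH[of l] less.prems span_mono[OF block_krylov_gens_mono[of l j]] by auto
    qed
    have "e i \<in> span (block_krylov_gens f e p i)" using less.IH[of i] less.prems i step_pos by auto
    moreover have "f ` span (block_krylov_gens f e p i) \<subseteq> ?K"
      unfolding i(1)
      by (intro linear_image_span_subset[OF linear] order.trans[OF image_block_krylov_gens span_superset])
    ultimately have image: "f (e i) \<in> ?K" by blast
    have remainder: "f (e i) - \<gamma> i *\<^sub>R e j \<in> ?K"
      using recurrence[of i] i less.prems lower by auto
    have "(1 / \<gamma> i) *\<^sub>R (f (e i) - (f (e i) - \<gamma> i *\<^sub>R e j)) \<in> ?K"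
      by (rule span_mul[OF span_diff[OF image remainder]])
    then show ?thesis using leading_nonzero[of i] i less.prems by simp
  qed
qed

theorem prefix_span_eq_span_block_krylov_gens:
  assumes "m \<le> n"
  shows "span (e ` {1..m}) = span (block_krylov_gens f e p m)"
  unfolding span_eq
proof safe
  fix j assume j: "j \<in> {1..m}"
  then have "e j \<in> span (block_krylov_gens f e p j)"
    using assms by (intro in_span_block_krylov_gens) auto
  moreover have "span (block_krylov_gens f e p j) \<subseteq> span (block_krylov_gens f e p m)"
    using j by (intro span_mono block_krylov_gens_mono) simp
  ultimately show "e j \<in> span (block_krylov_gens f e p m)" by blast
next
  fix y assume "y \<in> block_krylov_gens f e p m"
  then obtain k r where kr: "r \<in> {1..p}" "k * p + r \<le> m" and y: "y = (f ^^ k) (e r)"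
    by (auto simp: block_krylov_gens_def)
  have "y \<in> span (e ` {1..k * p + r})"
    unfolding y by (rule funpow_in_prefix_span) (use kr assms in auto)
  then show "y \<in> span (e ` {1..m})"
    using prefix_span_mono[OF kr(2)] by blast
qed

end

lemma krylov_eq_span_block_krylov_gens:
  "krylov M (e 1) m = span (block_krylov_gens ((*v) M) e 1 m)"
  unfolding krylov_def block_krylov_gens_def
  by (rule arg_cong[where f = span]) (auto simp: Suc_le_eq)

lemma block_krylov_gens_two:
  "block_krylov_gens f e 2 m =
     {(f ^^ k) (e 1) | k. k < (m + 1) div 2} \<union> {(f ^^ k) (e 2) | k. k < m div 2}"
proof (intro equalityI subsetI)
  fix y assume "y \<in> block_krylov_gens f e 2 m"
  then obtain k r where r: "r \<in> {1..2}" and k: "k * 2 + r \<le> m" and y: "y = (f ^^ k) (e r)"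
    by (auto simp: block_krylov_gens_def)
  from r consider "r = 1" | "r = 2" by fastforce
  then show "y \<in> {(f ^^ k) (e 1) | k. k < (m + 1) div 2} \<union> {(f ^^ k) (e 2) | k. k < m div 2}"
  proof cases
    case 1
    with k have "k < (m + 1) div 2" by linarith
    with 1 y show ?thesis by blast
  next
    case 2
    with k have "k < m div 2" by linarith
    with 2 y show ?thesis by blast
  qed
next
  fix y assume "y \<in> {(f ^^ k) (e 1) | k. k < (m + 1) div 2} \<union> {(f ^^ k) (e 2) | k. k < m div 2}"
  then consider k where "k < (m + 1) div 2" "y = (f ^^ k) (e 1)"
    | k where "k < m div 2" "y = (f ^^ k) (e 2)" by blast
  then show "y \<in> block_krylov_gens f e 2 m"
  proof cases
    case 1
    then have "k * 2 + 1 \<le> m" by linarith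
    with 1 show ?thesis unfolding block_krylov_gens_def by force
  next
    case 2
    then have "k * 2 + 2 \<le> m" by linarith
    with 2 show ?thesis unfolding block_krylov_gens_def by force
  qed
qed

lemma block_krylov_eq_span_block_krylov_gens:
  "block_krylov M (e 1) (e 2) m = span (block_krylov_gens ((*v) M) e 2 m)"
  by (simp add: block_krylov_def krylov_def block_krylov_gens_two span_Un)

theorem proposition4p1:
  fixes z :: "'n::finite \<Rightarrow> real"
    and v w :: "nat \<Rightarrow> real^'n"
    and b c d :: "nat \<Rightarrow> real"
  defines "N \<equiv> CARD('n)"
  assumes N_ge2: "2 \<le> N"
    and z_distinct: "inj z"
    and w1v1: "w 1 \<bullet> v 1 = 1"
    and w2v1: "w 2 \<bullet> v 1 = 0"
    and w2Zv1: "w 2 \<bullet> (diag_mat z *v v 1) = 1"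
    and H: "\<And>i j. i \<in> {1..N} \<Longrightarrow> j \<in> {1..N} \<Longrightarrow>
              w i \<bullet> (diag_mat z *v v j) =
                (if i = j then b (i - 1)
                 else if i = j + 1 then 1
                 else if j = i + 1 then c i
                 else if j = i + 2 then d (i + 1)
                 else 0)"
    and biorth: "\<And>i j. i \<in> {1..N} \<Longrightarrow> j \<in> {1..N} \<Longrightarrow>
              w i \<bullet> v j = (if i = j then 1 else 0)"
    and d_nz: "\<And>n. 2 \<le> n \<Longrightarrow> n \<le> N - 1 \<Longrightarrow> d n \<noteq> 0"
  shows "\<forall>m \<le> N. is_basis_family v m (krylov (diag_mat z) (v 1) m)
                 \<and> is_basis_family w m (block_krylov (diag_mat z) (w 1) (w 2) m)"
proof -
  let ?Z = "diag_mat z"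
  have CARD: "CARD('n) = N" by (simp add: N_def)
  then have DIM: "DIM(real^'n) = N" by simp
  have bo: "biorthogonal w v {1..DIM(real^'n)}"
    unfolding biorthogonal_def DIM using biorth by blast
  have bo': "biorthogonal v w {1..DIM(real^'n)}"
    using bo by (rule biorthogonal_commute[THEN iffD1])
  interpret V: block_krylov_recurrence "(*v) ?Z" v 1 N "\<lambda>_. 1"
  proof (rule block_krylov_recurrence.intro[OF matrix_vector_mul_linear])
    fix j assume j: "1 \<le> j" "j + 1 \<le> N"
    show "?Z *v v j - 1 *\<^sub>R v (j + 1) \<in> span (v ` {1..<j + 1})"
    proof (rule biorthogonal_diff_leading_in_span[OF bo])
      fix i assume "j + 1 \<le> i" "i \<le> DIM(real^'n)"
      then show "w i \<bullet> (?Z *v v j) = (if i = j + 1 then 1 else 0)"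
        using H[of i j] j by (simp add: CARD)
    qed simp
  qed simp_all
  interpret W: block_krylov_recurrence "(*v) ?Z" w 2 N "\<lambda>j. d (j + 1)"
  proof (rule block_krylov_recurrence.intro[OF matrix_vector_mul_linear])
    fix j assume j: "1 \<le> j" "j + 2 \<le> N"
    show "?Z *v w j - d (j + 1) *\<^sub>R w (j + 2) \<in> span (w ` {1..<j + 2})"
    proof (rule biorthogonal_diff_leading_in_span[OF bo'])
      fix i assume "j + 2 \<le> i" "i \<le> DIM(real^'n)"
      then show "v i \<bullet> (?Z *v w j) = (if i = j + 2 then d (j + 1) else 0)"
        using H[of j i] j inner_symmetric_matrix[OF transpose_diag_mat, where x = "v i" and y = "w j"]
        by (simp add: CARD)
    qed simp
    show "d (j + 1) \<noteq> 0" using d_nz j by simp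
  qed simp
  show ?thesis
  proof (intro allI impI conjI)
    fix m assume m: "m \<le> N"
    then have sub: "{1..m} \<subseteq> {1..DIM(real^'n)}" by (simp add: CARD)
    show "is_basis_family v m (krylov ?Z (v 1) m)"
      by (rule is_basis_family_if_biorthogonal[OF biorthogonal_subset[OF bo sub]])
        (unfold krylov_eq_span_block_krylov_gens, rule V.prefix_span_eq_span_block_krylov_gens[OF m])
    show "is_basis_family w m (block_krylov ?Z (w 1) (w 2) m)"
      by (rule is_basis_family_if_biorthogonal[OF biorthogonal_subset[OF bo' sub]])
        (unfold block_krylov_eq_span_block_krylov_gens, rule W.prefix_span_eq_span_block_krylov_gens[OF m])
  qed
qed

end
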